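(* Let $(X,d,\mu)$ be a metric measure space with $\mu$ doubling, and let $\nu$ be a doubling measure on $X$. If $\nu$ satisfies condition (1), then $\nu$ satisfies condition (2) and condition (4).
   Context: $\mu,\nu$ are Borel measures giving positive finite measure to balls; doubling means $\mu(B(x,2r))\le c\,\mu(B(x,r))$ for all $x,r$. $\nu$ is a weighted measure with respect to $\mu$ if there exists $0\le\omega\in L^1_{loc}(X)$ with $\nu(A)=\int_A\omega\,d\mu$ for every $\mu$-measurable $A$. Condition (1): there are $0<\varepsilon,\delta<1$ such that for each ball $B$ and each measurable $E\subseteq B$, $\mu(E)\le\varepsilon\mu(B)$ implies $\nu(E)\le(1-\delta)\nu(B)$. Condition (2): there are constants $c>0$ and $p\ge1$ such that $\nu(E)\le c\,\nu(B)\big(\mu(E)/\mu(B)\big)^{1/p}$ for every ball $B$ and every measurable $E\subseteq B$. Condition (4): $\nu$ is a weighted measure with respect to $\mu$, and there are constants $c>0$, $p\ge1$ such that $\nu(E)\ge c\,\nu(B)\big(\mu(E)/\mu(B)\big)^{p}$ for every ball $B$ and every measurable $E\subseteq B$. *)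

theory Defs
  imports "HOL-Analysis.Analysis"
begin

definition ball_measure :: "'a::metric_space measure \<Rightarrow> bool" where
  "ball_measure M \<longleftrightarrow> sets M = sets borel \<and>
     (\<forall>x r. r > 0 \<longrightarrow> 0 < emeasure M (ball x r) \<and> emeasure M (ball x r) < \<infinity>)"

definition doubling_measure :: "'a::metric_space measure \<Rightarrow> bool" where
  "doubling_measure M \<longleftrightarrow> ball_measure M \<and>
     (\<exists>c. \<forall>x r. r > 0 \<longrightarrow> measure M (ball x (2 * r)) \<le> c * measure M (ball x r))"

definition cond1 :: "'a::metric_space measure \<Rightarrow> 'a measure \<Rightarrow> bool" where
  "cond1 M N \<longleftrightarrow> (\<exists>\<epsilon> \<delta>::real. 0 < \<epsilon> \<and> \<epsilon> < 1 \<and> 0 < \<delta> \<and> \<delta> < 1 \<and>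
     (\<forall>x r E. r > 0 \<longrightarrow> E \<in> sets M \<longrightarrow> E \<subseteq> ball x r \<longrightarrow>
        measure M E \<le> \<epsilon> * measure M (ball x r) \<longrightarrow>
        measure N E \<le> (1 - \<delta>) * measure N (ball x r)))"

definition cond2 :: "'a::metric_space measure \<Rightarrow> 'a measure \<Rightarrow> bool" where
  "cond2 M N \<longleftrightarrow> (\<exists>c p::real. c > 0 \<and> p \<ge> 1 \<and>
     (\<forall>x r E. r > 0 \<longrightarrow> E \<in> sets M \<longrightarrow> E \<subseteq> ball x r \<longrightarrow>
        measure N E \<le> c * measure N (ball x r) *
          (measure M E / measure M (ball x r)) powr (1 / p)))"

definition weighted_measure :: "'a::metric_space measure \<Rightarrow> 'a measure \<Rightarrow> bool" where
  "weighted_measure M N \<longleftrightarrow> (\<exists>\<omega> :: 'a \<Rightarrow> real.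
     \<omega> \<in> borel_measurable M \<and> (\<forall>y. 0 \<le> \<omega> y) \<and>
     (\<forall>x r. r > 0 \<longrightarrow> set_integrable M (ball x r) \<omega>) \<and>
     (\<forall>A \<in> sets M. emeasure N A = (\<integral>\<^sup>+ y \<in> A. ennreal (\<omega> y) \<partial>M)))"

definition cond4 :: "'a::metric_space measure \<Rightarrow> 'a measure \<Rightarrow> bool" where
  "cond4 M N \<longleftrightarrow> weighted_measure M N \<and> (\<exists>c p::real. c > 0 \<and> p \<ge> 1 \<and>
     (\<forall>x r E. r > 0 \<longrightarrow> E \<in> sets M \<longrightarrow> E \<subseteq> ball x r \<longrightarrow>
        measure N E \<ge> c * measure N (ball x r) *
          (measure M E / measure M (ball x r)) powr p))"

end

theory Submission
  imports Defs
begin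

text \<open>
  The heart of the proof is an expansion step: if an
  open set \<open>U\<close> is small compared to the \<open>\<mu>\<close>-balls of radius \<open>\<rho>\<close> around its points, then a
  stopping-time choice of dyadic balls, a Vitali-type selection and the enlargement of the
  selected balls by the factor 3 produce an open \<open>V \<supseteq> U\<close> with \<open>\<mu>(V) \<le> K \<mu>(U)\<close> but
  \<open>\<nu>(V) \<ge> (1 + \<gamma>) \<nu>(U)\<close>.  Iterating the step starting from an open neighbourhood of a set
  \<open>E \<subseteq> B\<close> (outer regularity) shows that \<open>\<nu>(E)/\<nu>(B)\<close> decays like a power of \<open>\<mu>(E)/\<mu>(B)\<close>,
  which is condition (2).

  Condition (2) is then shown to imply the reverse condition (1) for the pair \<open>(\<nu>, \<mu>)\<close>, so
  the same argument yields condition (2) with the roles exchanged; inverting that power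
  inequality gives the lower bound of condition (4).  Finally, condition (2) makes \<open>\<nu>\<close>
  absolutely continuous with respect to the \<open>\<sigma>\<close>-finite measure \<open>\<mu>\<close>, and the Radon-Nikodym
  theorem provides the locally integrable weight.
\<close>

lemma LIMSEQ_exceeds:
  fixes X :: "nat \<Rightarrow> 'a::linorder_topology"
  assumes "X \<longlonglongrightarrow> L" and "y < L"
  shows "\<exists>n. y < X n"
  using order_tendstoD(1)[OF assms] by (meson eventually_sequentially order_refl)

lemma le_powr_at_right:
  fixes x C t \<eta> :: real
  assumes "0 \<le> t" "\<eta> > 0" and bound: "\<And>s. s > t \<Longrightarrow> x \<le> C * s powr \<eta>"
  shows "x \<le> C * t powr \<eta>"
proof (rule tendsto_lowerbound)
  have "((\<lambda>s. s powr \<eta>) \<longlongrightarrow> t powr \<eta>) (at_right t)"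
    using \<open>\<eta> > 0\<close> eventually_at_right_less[of t] \<open>0 \<le> t\<close>
    by (intro tendsto_powr' tendsto_ident_at tendsto_const) (auto elim: eventually_mono)
  then show "((\<lambda>s. C * s powr \<eta>) \<longlongrightarrow> C * t powr \<eta>) (at_right t)"
    by (intro tendsto_mult tendsto_const)
  show "\<forall>\<^sub>F s in at_right t. x \<le> C * s powr \<eta>"
    using eventually_at_right_less[of t] by (auto elim: eventually_mono intro: bound)
qed simp

lemma exists_steps_power_bound:
  fixes a g u :: real
  assumes a: "a > 1" and g: "g > 0" and u: "0 < u" "u \<le> 1"
  shows "\<exists>k. a ^ k * u \<le> 1 \<and> 1 \<le> (1 + g) ^ k * ((1 + g) * u powr log a (1 + g))"
proof -
  define L where "L = log a (1 / u)"
  define k where "k = nat \<lfloor>L\<rfloor>"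
  define \<eta> where "\<eta> = log a (1 + g)"
  have "L \<ge> 0" unfolding L_def using a u by simp
  then have k: "real k \<le> L" "L < real k + 1" unfolding k_def by linarith+
  have a_L: "a powr L = 1 / u" unfolding L_def using a u by simp
  have "a ^ k = a powr real k" using a by (simp add: powr_realpow)
  also have "\<dots> \<le> a powr L" using a k by simp
  finally have "a ^ k * u \<le> 1" using a_L u by (simp add: field_simps)
  moreover have "1 \<le> (1 + g) ^ k * ((1 + g) * u powr \<eta>)"
  proof -
    have "(1 + g) powr L = (a powr \<eta>) powr L"
      using a g by (simp add: \<eta>_def)
    also have "\<dots> = (a powr L) powr \<eta>"
      by (simp add: powr_powr mult.commute)
    also have "\<dots> = 1 / u powr \<eta>" using a_L by (simp add: powr_divide)
    finally have "1 / u powr \<eta> \<le> (1 + g) powr (real k + 1)"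
      using g k by (metis less_add_same_cancel1 powr_mono less_imp_le)
    also have "\<dots> = (1 + g) ^ k * (1 + g)"
      using g by (simp add: powr_add powr_realpow)
    finally show ?thesis using u by (simp add: field_simps)
  qed
  ultimately show ?thesis unfolding \<eta>_def by blast
qed

section \<open>Outer regularity of finite Borel measures on metric spaces\<close>

definition closed_open_approximable :: "'a::topological_space measure \<Rightarrow> 'a set \<Rightarrow> bool" where
  "closed_open_approximable M A \<longleftrightarrow>
     (\<forall>e>0. \<exists>F U. closed F \<and> open U \<and> F \<subseteq> A \<and> A \<subseteq> U \<and> measure M (U - F) \<le> e)"

text \<open>In a metric space an open set \<open>U\<close> is exhausted by the closed sets of points at distance
  at least \<open>1/(n+1)\<close> from its complement.\<close>

lemma approximable_open:
  fixes M :: "'a::metric_space measure"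
  assumes "finite_measure M" and sets_M: "sets M = sets borel" and "open U"
  shows "closed_open_approximable M U"
  unfolding closed_open_approximable_def
proof (intro allI impI)
  interpret finite_measure M by fact
  fix e :: real assume "e > 0"
  define F where "F n = (\<Inter>y\<in>-U. - ball y (1 / Suc n))" for n :: nat
  have closed_F: "closed (F n)" for n
    unfolding F_def by blast
  have F_U: "F n \<subseteq> U" for n
    unfolding F_def by force
  have inc_F: "incseq F"
  proof (rule monoI)
    fix m n :: nat assume "m \<le> n"
    then have "1 / Suc n \<le> 1 / Suc m" by (simp add: frac_le)
    then show "F m \<subseteq> F n" unfolding F_def by force
  qed
  have "(\<Union>n. F n) = U"
  proof (intro equalityI subsetI)
    fix x assume "x \<in> U"
    then obtain r where "r > 0" "ball x r \<subseteq> U"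
      using \<open>open U\<close> open_contains_ball by blast
    moreover obtain n where "1 / Suc n < r"
      using \<open>r > 0\<close> by (metis nat_approx_posE)
    ultimately have "x \<in> F n"
      unfolding F_def by (force simp: dist_commute)
    then show "x \<in> (\<Union>n. F n)" by blast
  qed (use F_U in blast)
  moreover have "(\<lambda>n. measure M (F n)) \<longlonglongrightarrow> measure M (\<Union>n. F n)"
    using closed_F sets_M by (intro finite_Lim_measure_incseq inc_F) auto
  ultimately obtain n where "measure M U - e < measure M (F n)"
    using LIMSEQ_exceeds[of _ "measure M U" "measure M U - e"] \<open>e > 0\<close> by auto
  moreover have "measure M (U - F n) = measure M U - measure M (F n)"
    using F_U closed_F \<open>open U\<close> sets_M by (intro finite_measure_Diff) auto
  ultimately have "measure M (U - F n) \<le> e" by simp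
  then show "\<exists>F U'. closed F \<and> open U' \<and> F \<subseteq> U \<and> U \<subseteq> U' \<and> measure M (U' - F) \<le> e"
    using closed_F F_U \<open>open U\<close> by (intro exI conjI) (assumption | rule order_refl)+
qed

lemma approximable_Compl:
  assumes "closed_open_approximable M A"
  shows "closed_open_approximable M (- A)"
  unfolding closed_open_approximable_def
proof (intro allI impI)
  fix e :: real assume "e > 0"
  then have "\<exists>F U. closed F \<and> open U \<and> F \<subseteq> A \<and> A \<subseteq> U \<and> measure M (U - F) \<le> e"
    using assms unfolding closed_open_approximable_def by blast
  then obtain F U where FU: "closed F" "open U" "F \<subseteq> A" "A \<subseteq> U" "measure M (U - F) \<le> e"
    by blast
  have "-F - -U = U - F" by blast
  then have "measure M (-F - -U) \<le> e" using FU(5) by (simp only:)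
  moreover have "closed (-U)" "open (-F)" "-U \<subseteq> -A" "-A \<subseteq> -F"
    using FU by auto
  ultimately show "\<exists>F' U'. closed F' \<and> open U' \<and> F' \<subseteq> -A \<and> -A \<subseteq> U' \<and> measure M (U' - F') \<le> e"
    by (intro exI conjI) assumption+
qed

lemma (in finite_measure) finite_union_approximates:
  fixes F :: "nat \<Rightarrow> 'a set"
  assumes F_sets: "\<And>i. F i \<in> sets M" and "e > 0"
  shows "\<exists>n. measure M ((\<Union>i. F i) - (\<Union>i<n. F i)) < e"
proof -
  define G where "G n = (\<Union>i<n. F i)" for n
  have G_sets: "G n \<in> sets M" for n
    unfolding G_def using F_sets by blast
  have UF_sets: "(\<Union>i. F i) \<in> sets M"
    using F_sets by blast
  have "incseq G" unfolding G_def by (intro monoI UN_mono) auto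
  then have "(\<lambda>n. measure M (G n)) \<longlonglongrightarrow> measure M (\<Union>n. G n)"
    using G_sets by (intro finite_Lim_measure_incseq) auto
  moreover have "(\<Union>n. G n) = (\<Union>i. F i)" unfolding G_def by blast
  ultimately have lim: "(\<lambda>n. measure M (G n)) \<longlonglongrightarrow> measure M (\<Union>i. F i)"
    by simp
  obtain n where "measure M (\<Union>i. F i) - e < measure M (G n)"
    using LIMSEQ_exceeds[OF lim, of "measure M (\<Union>i. F i) - e"] \<open>e > 0\<close> by auto
  moreover have "measure M ((\<Union>i. F i) - G n) = measure M (\<Union>i. F i) - measure M (G n)"
    using UF_sets G_sets by (intro finite_measure_Diff) (auto simp: G_def)
  ultimately have "measure M ((\<Union>i. F i) - G n) < e" by simp
  then show ?thesis unfolding G_def ..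
qed

text \<open>Countable unions: approximate the \<open>i\<close>-th set up to \<open>e/4 \<cdot> 2\<^sup>-\<^sup>i\<close>, so that the union of the
  open sets exceeds the union of the closed sets by at most \<open>e/2\<close>, and replace the latter
  union by a finite one, which is closed.\<close>

lemma approximable_UN:
  fixes M :: "'a::metric_space measure"
  assumes "finite_measure M" and sets_M: "sets M = sets borel"
    and A: "\<And>i::nat. closed_open_approximable M (A i)"
  shows "closed_open_approximable M (\<Union>i. A i)"
  unfolding closed_open_approximable_def
proof (intro allI impI)
  interpret finite_measure M by fact
  have open_sets [simp]: "open S \<Longrightarrow> S \<in> sets M" and closed_sets [simp]: "closed S \<Longrightarrow> S \<in> sets M" for S
    using sets_M by auto
  fix e :: real assume "e > 0"
  define e' where "e' i = e * (1/2) ^ i / 4" for i :: nat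
  have e'_pos: "e' i > 0" for i
    unfolding e'_def using \<open>e > 0\<close> by simp
  have "\<exists>F U. closed F \<and> open U \<and> F \<subseteq> A i \<and> A i \<subseteq> U \<and> measure M (U - F) \<le> e' i" for i
    using A[of i] e'_pos[of i] unfolding closed_open_approximable_def by blast
  then obtain F U where FU: "\<And>i. closed (F i) \<and> open (U i) \<and> F i \<subseteq> A i \<and> A i \<subseteq> U i \<and> measure M (U i - F i) \<le> e' i"
    by metis
  then have F_U: "\<And>i. closed (F i)" "\<And>i. open (U i)" "\<And>i. F i \<subseteq> A i" "\<And>i. A i \<subseteq> U i"
    and small: "\<And>i. measure M (U i - F i) \<le> e' i"
    by simp_all
  have F_sets: "F i \<in> sets M" and U_sets: "U i \<in> sets M" for i
    using F_U by auto
  have sum_e': "e' sums (e / 2)"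
    using sums_divide[OF sums_mult[OF geometric_sums[of "1/2::real"], of e], of 4] unfolding e'_def by simp
  have summable: "summable (\<lambda>i. measure M (U i - F i))"
    by (rule summable_comparison_test[OF _ sums_summable[OF sum_e']]) (use small in auto)
  have "measure M ((\<Union>i. U i) - (\<Union>i. F i)) \<le> measure M (\<Union>i. U i - F i)"
    using F_sets U_sets by (intro finite_measure_mono) blast+
  also have "\<dots> \<le> (\<Sum>i. measure M (U i - F i))"
    using F_sets U_sets by (intro finite_measure_subadditive_countably summable) auto
  also have "\<dots> \<le> (\<Sum>i. e' i)"
    by (intro suminf_le small summable sums_summable[OF sum_e'])
  also have "\<dots> = e / 2"
    using sum_e' by (rule sums_unique[symmetric])
  finally have tail_U: "measure M ((\<Union>i. U i) - (\<Union>i. F i)) \<le> e / 2" .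
  have "e / 2 > 0" using \<open>e > 0\<close> by simp
  then have "\<exists>n. measure M ((\<Union>i. F i) - (\<Union>i<n. F i)) < e / 2"
    by (rule finite_union_approximates[OF F_sets])
  then obtain n where tail_F: "measure M ((\<Union>i. F i) - (\<Union>i<n. F i)) < e / 2" ..
  define G where "G = (\<Union>i<n. F i)"
  have sets: "(\<Union>i. U i) \<in> sets M" "(\<Union>i. F i) \<in> sets M" "G \<in> sets M"
    unfolding G_def using F_sets U_sets by blast+
  have "(\<Union>i. U i) - G = ((\<Union>i. U i) - (\<Union>i. F i)) \<union> ((\<Union>i. F i) - G)"
    using F_U(3,4) unfolding G_def by blast
  then have "measure M ((\<Union>i. U i) - G) \<le> measure M ((\<Union>i. U i) - (\<Union>i. F i)) + measure M ((\<Union>i. F i) - G)"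
    using sets by (simp add: measure_Un_le sets.Diff)
  then have "measure M ((\<Union>i. U i) - G) \<le> e"
    using tail_U tail_F unfolding G_def by linarith
  moreover have "closed G"
    unfolding G_def using F_U(1) by auto
  moreover have "G \<subseteq> (\<Union>i. A i)"
    unfolding G_def using F_U(3) by blast
  moreover have "open (\<Union>i. U i)"
    using F_U(2) by auto
  moreover have "(\<Union>i. A i) \<subseteq> (\<Union>i. U i)"
    using F_U(4) by blast
  ultimately show "\<exists>F U. closed F \<and> open U \<and> F \<subseteq> (\<Union>i. A i) \<and> (\<Union>i. A i) \<subseteq> U \<and> measure M (U - F) \<le> e"
    by (intro exI conjI) assumption+
qed

lemma finite_borel_measure_regular:
  fixes M :: "'a::metric_space measure"
  assumes "finite_measure M" and "sets M = sets borel" and "A \<in> sets borel"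
  shows "closed_open_approximable M A"
  using assms(3) unfolding sets_borel
proof (induction rule: sigma_sets.induct)
  case (Basic U)
  then show ?case by (intro approximable_open assms(1,2)) simp
next
  case Empty
  show ?case by (rule approximable_open[OF assms(1,2)]) simp
next
  case (Compl A)
  then show ?case using approximable_Compl by (simp add: Compl_eq_Diff_UNIV[symmetric])
next
  case (Union A)
  show ?case by (rule approximable_UN[OF assms(1,2) Union.IH])
qed

lemma ball_subset_triple:
  fixes x y :: "'a::metric_space"
  assumes "r \<le> s" and "ball x r \<inter> ball y s \<noteq> {}"
  shows "ball x r \<subseteq> ball y (3 * s)"
proof
  fix z assume z: "z \<in> ball x r"
  obtain w where w: "w \<in> ball x r" "w \<in> ball y s" using assms(2) by blast
  have "dist y z \<le> dist y w + dist w x + dist x z"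
    using dist_triangle[of y z w] dist_triangle[of w z x] by linarith
  then show "z \<in> ball y (3 * s)"
    using w z assms(1) by (simp add: dist_commute)
qed

locale doubling_space =
  fixes M :: "'a::metric_space measure" and c :: real
  assumes sets_M: "sets M = sets borel"
    and emeasure_ball_pos: "\<And>x r. r > 0 \<Longrightarrow> 0 < emeasure M (ball x r)"
    and emeasure_ball_finite: "\<And>x r. r > 0 \<Longrightarrow> emeasure M (ball x r) < \<infinity>"
    and doubling_const: "c \<ge> 1"
    and doubling: "\<And>x r. r > 0 \<Longrightarrow> measure M (ball x (2 * r)) \<le> c * measure M (ball x r)"

lemma doubling_measure_imp_doubling_space:
  assumes "doubling_measure M"
  obtains c where "doubling_space M c"
proof -
  obtain c where ball: "ball_measure M"
    and dbl: "\<And>x r. r > 0 \<Longrightarrow> measure M (ball x (2 * r)) \<le> c * measure M (ball x r)"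
    using assms unfolding doubling_measure_def by blast
  have "doubling_space M (max c 1)"
  proof
    show "sets M = sets borel" "\<And>x r. r > 0 \<Longrightarrow> 0 < emeasure M (ball x r)"
      "\<And>x r. r > 0 \<Longrightarrow> emeasure M (ball x r) < \<infinity>"
      using ball unfolding ball_measure_def by auto
    show "max c 1 \<ge> 1" by simp
    show "measure M (ball x (2 * r)) \<le> max c 1 * measure M (ball x r)" if "r > 0" for x r
    proof -
      have "c * measure M (ball x r) \<le> max c 1 * measure M (ball x r)"
        by (intro mult_right_mono) auto
      moreover have "measure M (ball x (2 * r)) \<le> c * measure M (ball x r)"
        using dbl that by blast
      ultimately show ?thesis by linarith
    qed
  qed
  then show thesis by (rule that)
qed

text \<open>The invariant of the level-by-level Vitali selection for a family of balls \<open>B x\<close> with levels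
  \<open>lev x\<close>, \<open>x \<in> S\<close>: after treating the levels below \<open>n\<close>, the selected centres form a finite
  set \<open>A\<close> of disjoint balls of these levels, and every ball of such a level meets a selected ball
  of at most the same level.\<close>

definition vitali_selection :: "('a \<Rightarrow> 'a set) \<Rightarrow> ('a \<Rightarrow> nat) \<Rightarrow> 'a set \<Rightarrow> nat \<Rightarrow> 'a set \<Rightarrow> bool" where
  "vitali_selection B lev S n A \<longleftrightarrow> finite A \<and> A \<subseteq> S \<and> (\<forall>y\<in>A. lev y < n) \<and> disjoint_family_on B A \<and>
     (\<forall>x\<in>S. lev x < n \<longrightarrow> (\<exists>y\<in>A. lev y \<le> lev x \<and> B x \<inter> B y \<noteq> {}))"

context doubling_space
begin

lemma space_M [simp]: "space M = UNIV"
  using sets_M sets_eq_imp_space_eq by fastforce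

lemma borel_sets_M [simp]: "A \<in> sets borel \<Longrightarrow> A \<in> sets M"
  using sets_M by simp

lemma open_sets_M [intro, simp]: "open U \<Longrightarrow> U \<in> sets M"
  using sets_M by auto

lemma fmeasurable_bounded:
  assumes "A \<in> sets M" and "bounded A"
  shows "A \<in> fmeasurable M"
proof -
  obtain r where "r > 0" "A \<subseteq> ball undefined r"
    using bounded_subset_ballD[OF \<open>bounded A\<close>] by blast
  moreover have "ball undefined r \<in> fmeasurable M"
    using emeasure_ball_finite \<open>r > 0\<close> by (intro fmeasurableI) auto
  ultimately show ?thesis
    using fmeasurableI2 assms(1) by blast
qed

lemma emeasure_bounded_finite: "A \<in> sets M \<Longrightarrow> bounded A \<Longrightarrow> emeasure M A \<noteq> \<infinity>"
  using fmeasurable_bounded fmeasurableD2 by (metis infinity_ennreal_def)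

lemma emeasure_ball_ne_top [simp]: "emeasure M (ball x r) \<noteq> top"
  using emeasure_bounded_finite[of "ball x r"] by simp

lemma measure_mono_bounded:
  "A \<subseteq> B \<Longrightarrow> A \<in> sets M \<Longrightarrow> B \<in> sets M \<Longrightarrow> bounded B \<Longrightarrow> measure M A \<le> measure M B"
  by (simp add: fmeasurable_bounded measure_mono_fmeasurable)

lemma measure_disjoint_add_le:
  assumes "U \<in> sets M" "W \<in> sets M" "U \<inter> W = {}" "U \<union> W \<subseteq> V" "V \<in> sets M" "bounded V"
  shows "measure M U + measure M W \<le> measure M V"
proof -
  have "bounded U" "bounded W" using assms(4,6) bounded_subset by blast+
  then have "measure M U + measure M W = measure M (U \<union> W)"
    using assms(1-3) by (intro measure_Union[symmetric] emeasure_bounded_finite) auto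
  also have "\<dots> \<le> measure M V"
    using assms by (intro measure_mono_bounded) auto
  finally show ?thesis .
qed

lemma measure_ball_pos: "r > 0 \<Longrightarrow> measure M (ball x r) > 0"
  using emeasure_ball_pos[of r x] emeasure_eq_measure2[OF fmeasurable_bounded[of "ball x r"]]
  by simp

lemma measure_ball_doubling_iter:
  assumes "r > 0"
  shows "measure M (ball x (2 ^ n * r)) \<le> c ^ n * measure M (ball x r)"
proof (induction n)
  case (Suc n)
  have "measure M (ball x (2 ^ Suc n * r)) \<le> c * measure M (ball x (2 ^ n * r))"
    using doubling[of "2 ^ n * r" x] \<open>r > 0\<close> by (simp add: mult.assoc)
  also have "\<dots> \<le> c * (c ^ n * measure M (ball x r))"
    using Suc doubling_const by (intro mult_left_mono) auto
  finally show ?case by (simp add: mult.assoc)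
qed simp

lemma measure_ball_le_enlarged:
  assumes "r > 0" and "ball x s \<subseteq> ball y (2 ^ n * r)"
  shows "measure M (ball x s) \<le> c ^ n * measure M (ball y r)"
  using measure_mono_bounded[OF assms(2)] measure_ball_doubling_iter[OF assms(1), of y n] by simp

lemma tendsto_measure_incseq:
  assumes "incseq A" and "\<And>n. A n \<in> sets M" and "bounded (\<Union>n. A n)"
  shows "(\<lambda>n. measure M (A n)) \<longlonglongrightarrow> measure M (\<Union>n. A n)"
proof (rule Lim_measure_incseq)
  have "(\<Union>n. A n) \<in> sets M" using assms(2) by blast
  then show "emeasure M (\<Union>n. A n) \<noteq> \<infinity>"
    using assms(3) by (rule emeasure_bounded_finite)
qed (use assms in auto)

lemma tendsto_measure_Int_incseq:
  assumes "incseq A" and "\<And>n. A n \<in> sets M" and "U \<in> sets M" "bounded U" "U \<subseteq> (\<Union>n. A n)"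
  shows "(\<lambda>n. measure M (U \<inter> A n)) \<longlonglongrightarrow> measure M U"
proof -
  have "incseq (\<lambda>n. U \<inter> A n)"
    using \<open>incseq A\<close> by (auto simp: incseq_def)
  moreover have "bounded (\<Union>n. U \<inter> A n)"
    using \<open>bounded U\<close> by (rule bounded_subset) blast
  ultimately have "(\<lambda>n. measure M (U \<inter> A n)) \<longlonglongrightarrow> measure M (\<Union>n. U \<inter> A n)"
    using assms(2,3) by (intro tendsto_measure_incseq) auto
  moreover have "(\<Union>n. U \<inter> A n) = U" using \<open>U \<subseteq> (\<Union>n. A n)\<close> by blast
  ultimately show ?thesis by simp
qed

text \<open>Outer approximation of a set inside a ball by an open set inside the same ball.  This is
  regularity applied to the finite measure \<open>\<mu>\<close> restricted to the ball.\<close>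

lemma outer_approximation:
  assumes E: "E \<in> sets M" "E \<subseteq> ball z R" and "e > 0"
  obtains G where "open G" "E \<subseteq> G" "G \<subseteq> ball z R" "measure M G \<le> measure M E + e"
proof -
  define MR where "MR = density M (indicator (ball z R))"
  have measure_MR: "measure MR A = measure M (ball z R \<inter> A)" if "A \<in> sets M" for A
    unfolding MR_def measure_def using emeasure_restricted[of "ball z R" M A] that by simp
  have "emeasure MR (space MR) = emeasure M (ball z R)"
    unfolding MR_def using emeasure_restricted[of "ball z R" M UNIV] by simp
  then have "finite_measure MR"
    using emeasure_bounded_finite[of "ball z R"] by (intro finite_measureI) simp
  moreover have "sets MR = sets borel" by (simp add: MR_def sets_M)
  moreover have "E \<in> sets borel" using E sets_M by simp
  ultimately have "closed_open_approximable MR E"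
    by (rule finite_borel_measure_regular)
  then have "\<exists>F U. closed F \<and> open U \<and> F \<subseteq> E \<and> E \<subseteq> U \<and> measure MR (U - F) \<le> e"
    using \<open>e > 0\<close> unfolding closed_open_approximable_def by blast
  then obtain F U where FU: "closed F" "open U" "F \<subseteq> E" "E \<subseteq> U" "measure MR (U - F) \<le> e"
    by blast
  define G where "G = U \<inter> ball z R"
  have "G \<subseteq> E \<union> ball z R \<inter> (U - F)" unfolding G_def using FU(3) by blast
  then have "measure M G \<le> measure M (E \<union> ball z R \<inter> (U - F))"
    using E FU by (intro measure_mono_bounded) (auto simp: G_def intro: bounded_subset[OF bounded_ball])
  also have "\<dots> \<le> measure M E + measure M (ball z R \<inter> (U - F))"
    using E FU by (intro measure_Un_le) auto
  also have "\<dots> \<le> measure M E + e"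
    using FU measure_MR[of "U - F"] by auto
  finally have "measure M G \<le> measure M E + e" .
  moreover have "open G" "E \<subseteq> G" "G \<subseteq> ball z R" using FU E by (auto simp: G_def)
  ultimately show thesis using that by blast
qed

lemma measure_triple_balls_dense:
  assumes "finite A" and disj: "disjoint_family_on (\<lambda>y. ball y (r y)) A"
    and r: "\<And>y. y \<in> A \<Longrightarrow> r y > 0" and "\<kappa> > 0" and "E \<in> sets M"
    and dense: "\<And>y. y \<in> A \<Longrightarrow> \<kappa> * measure M (ball y (r y)) \<le> measure M (E \<inter> ball y (r y))"
  shows "\<kappa> * measure M (\<Union>y\<in>A. ball y (3 * r y)) \<le> c\<^sup>2 * measure M (E \<inter> (\<Union>y\<in>A. ball y (r y)))"
proof -
  have "measure M (\<Union>y\<in>A. ball y (3 * r y)) \<le> (\<Sum>y\<in>A. measure M (ball y (3 * r y)))"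
    using \<open>finite A\<close> by (intro measure_UNION_le) auto
  also have "\<dots> \<le> (\<Sum>y\<in>A. c\<^sup>2 * measure M (ball y (r y)))"
  proof (intro sum_mono measure_ball_le_enlarged)
    fix y assume "y \<in> A"
    then show "r y > 0" "ball y (3 * r y) \<subseteq> ball y (2\<^sup>2 * r y)"
      using r[of y] by (auto intro: subset_ball)
  qed
  finally have "\<kappa> * measure M (\<Union>y\<in>A. ball y (3 * r y)) \<le> \<kappa> * (\<Sum>y\<in>A. c\<^sup>2 * measure M (ball y (r y)))"
    using \<open>\<kappa> > 0\<close> by simp
  also have "\<dots> = c\<^sup>2 * (\<Sum>y\<in>A. \<kappa> * measure M (ball y (r y)))"
    by (simp add: sum_distrib_left algebra_simps)
  also have "\<dots> \<le> c\<^sup>2 * (\<Sum>y\<in>A. measure M (E \<inter> ball y (r y)))"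
    using dense by (intro mult_left_mono sum_mono) auto
  also have "(\<Sum>y\<in>A. measure M (E \<inter> ball y (r y))) = measure M (\<Union>y\<in>A. E \<inter> ball y (r y))"
  proof (intro measure_finite_Union[symmetric] disjoint_family_on_bisimulation[OF disj])
    show "emeasure M (E \<inter> ball y (r y)) \<noteq> \<infinity>" for y
      using \<open>E \<in> sets M\<close> by (intro emeasure_bounded_finite) (auto simp: bounded_Int)
  qed (use \<open>finite A\<close> \<open>E \<in> sets M\<close> in auto)
  also have "(\<Union>y\<in>A. E \<inter> ball y (r y)) = E \<inter> (\<Union>y\<in>A. ball y (r y))" by blast
  finally show ?thesis .
qed

lemma card_disjoint_balls_bounded:
  fixes w :: 'a
  assumes "r > 0"
  shows "\<exists>b::nat. \<forall>T. T \<subseteq> ball w R \<and> finite T \<and> disjoint_family_on (\<lambda>y. ball y r) T \<longrightarrow> card T \<le> b"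
proof -
  obtain q :: nat where "2 * (R + r) / r < 2 ^ q"
    using real_arch_pow[of 2 "2 * (R + r) / r"] by auto
  then have q: "2 * (R + r) < 2 ^ q * r" using \<open>r > 0\<close> by (simp add: field_simps)
  define m where "m = measure M (ball w (R + r))"
  have card_le: "real (card T) \<le> c ^ q"
    if T: "T \<subseteq> ball w R" "finite T" "disjoint_family_on (\<lambda>y. ball y r) T" for T
  proof (cases "T = {}")
    case True
    then show ?thesis using doubling_const by simp
  next
    case False
    then obtain y0 where "y0 \<in> T" by blast
    then have "R > 0"
      using T(1) by (meson mem_ball subsetD zero_le_dist le_less_trans)
    then have "m > 0"
      unfolding m_def using \<open>r > 0\<close> by (intro measure_ball_pos) simp
    text \<open>Each of the balls carries a fixed fraction of the measure of the common ball of
      radius \<open>R + r\<close> ...\<close>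
    have lower: "m \<le> c ^ q * measure M (ball y r)" if "y \<in> T" for y
      unfolding m_def
    proof (intro measure_ball_le_enlarged \<open>r > 0\<close> subsetI)
      fix z assume "z \<in> ball w (R + r)"
      moreover have "dist y w < R" using that T(1) by (auto simp: dist_commute)
      ultimately show "z \<in> ball y (2 ^ q * r)"
        using dist_triangle[of y z w] q \<open>r > 0\<close> by auto
    qed
    text \<open>... and they are disjoint subsets of that ball.\<close>
    have "(\<Sum>y\<in>T. measure M (ball y r)) = measure M (\<Union>y\<in>T. ball y r)"
      using T by (intro measure_finite_Union[symmetric]) (auto intro: emeasure_bounded_finite)
    also have "\<dots> \<le> m"
      unfolding m_def
    proof (intro measure_mono_bounded subsetI)
      fix z assume "z \<in> (\<Union>y\<in>T. ball y r)"
      then obtain y where "y \<in> T" "dist y z < r" by auto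
      then show "z \<in> ball w (R + r)"
        using T(1) dist_triangle[of w z y] by auto
    qed auto
    finally have upper: "(\<Sum>y\<in>T. measure M (ball y r)) \<le> m" .
    have "real (card T) * m = (\<Sum>y\<in>T. m)" by simp
    also have "\<dots> \<le> (\<Sum>y\<in>T. c ^ q * measure M (ball y r))" using lower by (rule sum_mono)
    also have "\<dots> \<le> c ^ q * m"
      using upper doubling_const by (simp add: sum_distrib_left[symmetric] mult_left_mono)
    finally show ?thesis using \<open>m > 0\<close> by simp
  qed
  have "card T \<le> nat \<lceil>c ^ q\<rceil>"
    if "T \<subseteq> ball w R" "finite T" "disjoint_family_on (\<lambda>y. ball y r) T" for T
    using card_le[OF that] real_nat_ceiling_ge[of "c ^ q"] by (meson of_nat_le_iff order_trans)
  then show ?thesis by blast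
qed

lemma maximal_disjoint_extension:
  fixes B :: "'a \<Rightarrow> 'a set"
  assumes L: "L \<subseteq> ball x0 R" and "r > 0" and B_L: "\<And>y. y \<in> L \<Longrightarrow> B y = ball y r"
    and disj: "disjoint_family_on B A"
  shows "\<exists>T\<subseteq>L. finite T \<and> disjoint_family_on B (A \<union> T) \<and> (\<forall>x\<in>L. \<exists>y\<in>A \<union> T. B x \<inter> B y \<noteq> {})"
proof -
  obtain b where b: "\<And>T. T \<subseteq> ball x0 R \<Longrightarrow> finite T \<Longrightarrow> disjoint_family_on (\<lambda>y. ball y r) T \<Longrightarrow> card T \<le> b"
    using card_disjoint_balls_bounded[OF \<open>r > 0\<close>, of x0 R] by blast
  text \<open>Admissible extensions have bounded cardinality, so there is one of maximal cardinality.\<close>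
  define admissible where "admissible T \<longleftrightarrow> T \<subseteq> L \<and> finite T \<and> disjoint_family_on B (A \<union> T)" for T
  have "admissible {}" unfolding admissible_def using disj by simp
  moreover have "card T < Suc b" if "admissible T" for T
  proof -
    have T: "T \<subseteq> L" "finite T" "disjoint_family_on B (A \<union> T)"
      using that unfolding admissible_def by simp_all
    have "disjoint_family_on B T"
      by (rule disjoint_family_on_mono[OF _ T(3)]) simp
    then have "disjoint_family_on (\<lambda>y. ball y r) T"
      by (rule disjoint_family_on_bisimulation) (use B_L T(1) in auto)
    then have "card T \<le> b" using T L by (intro b) auto
    then show ?thesis by simp
  qed
  ultimately have "\<exists>T. admissible T \<and> (\<forall>T'. admissible T' \<longrightarrow> card T' \<le> card T)"
    by (intro ex_has_greatest_nat[of admissible "{}" card "Suc b"]) auto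
  then obtain T where T: "admissible T" and T_max: "\<And>T'. admissible T' \<Longrightarrow> card T' \<le> card T"
    by blast
  text \<open>By maximality, no ball centred in \<open>L\<close> can be disjoint from all balls of the family.\<close>
  have cover: "\<exists>y\<in>A \<union> T. B x \<inter> B y \<noteq> {}" if "x \<in> L" for x
  proof (rule ccontr)
    assume "\<not> ?thesis"
    then have apart: "B x \<inter> (\<Union>y\<in>A \<union> T. B y) = {}" by auto
    moreover have "x \<in> B x" using B_L \<open>x \<in> L\<close> \<open>r > 0\<close> by simp
    ultimately have "x \<notin> A \<union> T" by auto
    then have "admissible (insert x T)"
      using T apart \<open>x \<in> L\<close> unfolding admissible_def by (simp add: disjoint_family_on_insert)
    then have "card (insert x T) \<le> card T" by (rule T_max)
    then show False using T \<open>x \<notin> A \<union> T\<close> unfolding admissible_def by simp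
  qed
  show ?thesis
    using T cover unfolding admissible_def by (intro exI[of _ T]) simp
qed

lemma vitali_selection_step:
  fixes B :: "'a \<Rightarrow> 'a set"
  assumes S: "S \<subseteq> ball x0 R" and "\<rho> > 0" and B: "\<And>x. B x = ball x (\<rho> / 2 ^ lev x)"
    and A: "vitali_selection B lev S n A"
  shows "\<exists>A'. vitali_selection B lev S (Suc n) A' \<and> A \<subseteq> A'"
proof -
  let ?L = "{x\<in>S. lev x = n}"
  from A have A_fin: "finite A" and A_S: "A \<subseteq> S" and A_lev: "\<forall>y\<in>A. lev y < n"
    and A_disj: "disjoint_family_on B A"
    and A_cover: "\<forall>x\<in>S. lev x < n \<longrightarrow> (\<exists>y\<in>A. lev y \<le> lev x \<and> B x \<inter> B y \<noteq> {})"
    unfolding vitali_selection_def by blast+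
  have "?L \<subseteq> ball x0 R" "\<rho> / 2 ^ n > 0" "\<And>y. y \<in> ?L \<Longrightarrow> B y = ball y (\<rho> / 2 ^ n)"
    using S \<open>\<rho> > 0\<close> B by auto
  then have "\<exists>T\<subseteq>?L. finite T \<and> disjoint_family_on B (A \<union> T) \<and> (\<forall>x\<in>?L. \<exists>y\<in>A \<union> T. B x \<inter> B y \<noteq> {})"
    using A_disj by (rule maximal_disjoint_extension)
  then obtain T where T: "T \<subseteq> ?L" "finite T" "disjoint_family_on B (A \<union> T)"
    and cover: "\<forall>x\<in>?L. \<exists>y\<in>A \<union> T. B x \<inter> B y \<noteq> {}"
    by blast
  have "vitali_selection B lev S (Suc n) (A \<union> T)"
    unfolding vitali_selection_def
  proof (intro conjI ballI impI)
    show "finite (A \<union> T)" "A \<union> T \<subseteq> S" "disjoint_family_on B (A \<union> T)"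
      using A_fin A_S T by auto
    show "lev y < Suc n" if "y \<in> A \<union> T" for y
      using that A_lev T(1) by force
    fix x assume "x \<in> S" "lev x < Suc n"
    show "\<exists>y\<in>A \<union> T. lev y \<le> lev x \<and> B x \<inter> B y \<noteq> {}"
    proof (cases "lev x < n")
      case True
      then show ?thesis using A_cover \<open>x \<in> S\<close> by blast
    next
      case False
      then have "x \<in> ?L" using \<open>x \<in> S\<close> \<open>lev x < Suc n\<close> by simp
      then obtain y where "y \<in> A \<union> T" "B x \<inter> B y \<noteq> {}" using cover by blast
      moreover have "lev y \<le> n" using \<open>y \<in> A \<union> T\<close> A_lev T(1) by force
      ultimately show ?thesis using \<open>x \<in> ?L\<close> by auto
    qed
  qed
  then show ?thesis by blast
qed

text \<open>Choosing level by level a maximal disjoint subfamily yields an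
  increasing sequence of finite sets of centres whose balls are pairwise disjoint, such that
  every ball \<open>B x\<close> meets a chosen ball which is at least as large.\<close>

lemma dyadic_vitali_covering:
  fixes lev :: "'a \<Rightarrow> nat" and S :: "'a set"
  assumes S: "S \<subseteq> ball x0 R" and "\<rho> > 0"
  defines "B \<equiv> \<lambda>x. ball x (\<rho> / 2 ^ lev x)"
  obtains C :: "nat \<Rightarrow> 'a set" where "incseq C" "\<And>n. finite (C n)" "\<And>n. C n \<subseteq> S"
    "disjoint_family_on B (\<Union>n. C n)"
    "\<And>x. x \<in> S \<Longrightarrow> \<exists>n. \<exists>y\<in>C n. lev y \<le> lev x \<and> B x \<inter> B y \<noteq> {}"
proof -
  have "\<And>x. B x = ball x (\<rho> / 2 ^ lev x)" unfolding B_def by simp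
  note step = vitali_selection_step[OF S \<open>\<rho> > 0\<close> this]
  have "vitali_selection B lev S 0 {}" unfolding vitali_selection_def disjoint_family_on_def by simp
  then have "\<exists>C. \<forall>n. vitali_selection B lev S n (C n) \<and> C n \<subseteq> C (Suc n)"
    using step by (intro dependent_nat_choice[of "vitali_selection B lev S" "\<lambda>_ A A'. A \<subseteq> A'"]) blast+
  then obtain C where C: "\<And>n. vitali_selection B lev S n (C n)" and C_mono: "\<And>n. C n \<subseteq> C (Suc n)"
    by blast
  have C_fin: "finite (C n)" and C_S: "C n \<subseteq> S" and C_disj: "disjoint_family_on B (C n)"
    and C_cover: "\<forall>x\<in>S. lev x < n \<longrightarrow> (\<exists>y\<in>C n. lev y \<le> lev x \<and> B x \<inter> B y \<noteq> {})" for n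
    using C[of n] unfolding vitali_selection_def by simp_all
  have "incseq C" using C_mono by (rule incseq_SucI)
  show thesis
  proof (rule that)
    show "incseq C" by fact
    show "finite (C n)" "C n \<subseteq> S" for n by (fact C_fin, fact C_S)
    show "disjoint_family_on B (\<Union>n. C n)"
      unfolding disjoint_family_on_def
    proof (intro ballI impI)
      fix y z assume "y \<in> (\<Union>n. C n)" "z \<in> (\<Union>n. C n)" "y \<noteq> z"
      then obtain m n where "y \<in> C m" "z \<in> C n" by blast
      then have "y \<in> C (max m n)" "z \<in> C (max m n)"
        using monoD[OF \<open>incseq C\<close>, of m "max m n"] monoD[OF \<open>incseq C\<close>, of n "max m n"] by auto
      then show "B y \<inter> B z = {}"
        using C_disj[of "max m n"] \<open>y \<noteq> z\<close> by (simp add: disjoint_family_onD)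
    qed
    show "\<exists>n. \<exists>y\<in>C n. lev y \<le> lev x \<and> B x \<inter> B y \<noteq> {}" if "x \<in> S" for x
      using C_cover[of "Suc (lev x)"] that by blast
  qed
qed

end

section \<open>The expansion step under condition (1)\<close>

text \<open>Two doubling measures \<open>M\<close> (that is \<open>\<mu>\<close>, constant \<open>c\<close>) and \<open>N\<close> (that is \<open>\<nu>\<close>, constant \<open>d\<close>)
  satisfying condition (1) with constants \<open>\<epsilon>\<close>, \<open>\<delta>\<close>.\<close>

locale doubling_cond1 = m: doubling_space M c + n: doubling_space N d
  for M :: "'a::metric_space measure" and N :: "'a measure" and c d +
  fixes \<epsilon> \<delta> :: real
  assumes eps: "0 < \<epsilon>" "\<epsilon> < 1" and del: "0 < \<delta>" "\<delta> < 1"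
    and cond1: "\<And>x r E. r > 0 \<Longrightarrow> E \<in> sets M \<Longrightarrow> E \<subseteq> ball x r \<Longrightarrow>
        measure M E \<le> \<epsilon> * measure M (ball x r) \<Longrightarrow> measure N E \<le> (1 - \<delta>) * measure N (ball x r)"
begin

text \<open>The constants of the expansion step: \<open>\<mu>\<close> grows at most by the factor \<open>K\<close> while \<open>\<nu>\<close> grows
  at least by the factor \<open>1 + \<gamma>\<close>; \<open>\<eta>\<close> is the resulting decay exponent.\<close>

definition K :: real where "K = c ^ 3 / \<epsilon>"
definition \<gamma> :: real where "\<gamma> = \<delta> / d\<^sup>2"
definition \<eta> :: real where "\<eta> = log (K * c) (1 + \<gamma>)"

lemma sets_N [simp]: "sets N = sets M"
  using m.sets_M n.sets_M by simp

lemma K_gt_1: "K > 1"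
proof -
  have "1 < 1 / \<epsilon>" using eps by simp
  also have "\<dots> \<le> c ^ 3 / \<epsilon>" using m.doubling_const eps by (simp add: divide_right_mono)
  finally show ?thesis unfolding K_def .
qed

lemma Kc_gt_1: "K * c > 1"
proof -
  have "K * 1 \<le> K * c" using K_gt_1 m.doubling_const by (intro mult_left_mono) auto
  then show ?thesis using K_gt_1 by linarith
qed

lemma \<gamma>_pos: "\<gamma> > 0"
  unfolding \<gamma>_def using del n.doubling_const by simp

lemma \<eta>_pos: "\<eta> > 0"
  unfolding \<eta>_def using Kc_gt_1 \<gamma>_pos by simp

lemma dense_at_double_radius:
  assumes "U \<in> sets M" "r > 0"
    and "\<epsilon> * measure M (ball x (r / 2)) < measure M (U \<inter> ball x (r / 2))"
  shows "\<epsilon> / c * measure M (ball x r) \<le> measure M (U \<inter> ball x r)"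
proof -
  have "\<epsilon> * measure M (ball x r) \<le> \<epsilon> * (c * measure M (ball x (r / 2)))"
    using m.doubling[of "r / 2" x] \<open>r > 0\<close> eps by (intro mult_left_mono) auto
  also have "\<dots> \<le> c * measure M (U \<inter> ball x (r / 2))"
    using assms(3) m.doubling_const by (simp add: mult.left_commute)
  also have "\<dots> \<le> c * measure M (U \<inter> ball x r)"
    using assms(1,2) m.doubling_const
    by (intro mult_left_mono m.measure_mono_bounded) (auto intro: bounded_subset[OF bounded_ball])
  finally show ?thesis
    using m.doubling_const by (simp add: field_simps)
qed

lemma complement_heavy_where_sparse:
  assumes "U \<in> sets M" "r > 0"
    and "measure M (U \<inter> ball x r) \<le> \<epsilon> * measure M (ball x r)"
  shows "\<delta> * measure N (ball x r) \<le> measure N (- U \<inter> ball x r)"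
proof -
  have "measure N (U \<inter> ball x r) \<le> (1 - \<delta>) * measure N (ball x r)"
    using assms by (intro cond1) auto
  moreover have "measure N (- U \<inter> ball x r) = measure N (ball x r) - measure N (U \<inter> ball x r)"
  proof -
    have "- U \<inter> ball x r = ball x r - (U \<inter> ball x r)" by blast
    then show ?thesis
      using assms(1) n.emeasure_bounded_finite[of "ball x r"] by (auto intro!: measure_Diff)
  qed
  ultimately show ?thesis by (simp add: algebra_simps)
qed

text \<open>Stopping time: if \<open>U\<close> is \<open>\<epsilon>\<close>-sparse at scale \<open>\<rho>\<close> around each of its points, every point of
  the open set \<open>U\<close> has a last dyadic scale \<open>\<rho>/2\<^bsup>lev x\<^esup>\<close> at which \<open>U\<close> is still sparse, and
  \<open>U\<close> is dense at half that scale.\<close>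

lemma stopping_levels:
  assumes "open U" "bounded U" "\<rho> > 0"
    and sparse: "\<And>x. x \<in> U \<Longrightarrow> measure M U \<le> \<epsilon> * measure M (ball x \<rho>)"
  obtains lev :: "'a \<Rightarrow> nat" where
    "\<And>x. x \<in> U \<Longrightarrow> \<epsilon> / c * measure M (ball x (\<rho> / 2 ^ lev x)) \<le> measure M (U \<inter> ball x (\<rho> / 2 ^ lev x))"
    "\<And>x. x \<in> U \<Longrightarrow> \<delta> * measure N (ball x (\<rho> / 2 ^ lev x)) \<le> measure N (- U \<inter> ball x (\<rho> / 2 ^ lev x))"
proof -
  define dense where "dense x j \<longleftrightarrow> \<epsilon> * measure M (ball x (\<rho> / 2 ^ j)) < measure M (U \<inter> ball x (\<rho> / 2 ^ j))"
    for x j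
  have "\<exists>k. \<not> dense x k \<and> dense x (Suc k)" if "x \<in> U" for x
  proof -
    have "measure M (U \<inter> ball x \<rho>) \<le> measure M U"
      using \<open>open U\<close> \<open>bounded U\<close> by (intro m.measure_mono_bounded) auto
    then have "\<not> dense x 0" using sparse[OF that] unfolding dense_def by simp
    moreover have "\<exists>j. dense x j"
    proof -
      obtain s where "s > 0" "ball x s \<subseteq> U"
        using \<open>open U\<close> \<open>x \<in> U\<close> open_contains_ball by blast
      moreover obtain j where "(1 / 2) ^ j < s / \<rho>"
        using real_arch_pow_inv[of "s / \<rho>" "1 / 2"] \<open>s > 0\<close> \<open>\<rho> > 0\<close> by auto
      then have "\<rho> / 2 ^ j < s" using \<open>\<rho> > 0\<close> by (simp add: field_simps power_divide)
      ultimately have "U \<inter> ball x (\<rho> / 2 ^ j) = ball x (\<rho> / 2 ^ j)" by auto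
      moreover have "\<epsilon> * measure M (ball x (\<rho> / 2 ^ j)) < 1 * measure M (ball x (\<rho> / 2 ^ j))"
        using m.measure_ball_pos \<open>\<rho> > 0\<close> eps by (intro mult_strict_right_mono) auto
      ultimately have "dense x j" unfolding dense_def by simp
      then show ?thesis ..
    qed
    ultimately show ?thesis using ex_least_nat_less[of "dense x"] by blast
  qed
  then obtain lev where lev: "\<And>x. x \<in> U \<Longrightarrow> \<not> dense x (lev x) \<and> dense x (Suc (lev x))"
    by metis
  show thesis
  proof (rule that)
    fix x assume "x \<in> U"
    have half: "\<rho> / 2 ^ Suc (lev x) = \<rho> / 2 ^ lev x / 2" by simp
    show "\<epsilon> / c * measure M (ball x (\<rho> / 2 ^ lev x)) \<le> measure M (U \<inter> ball x (\<rho> / 2 ^ lev x))"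
      using lev[OF \<open>x \<in> U\<close>] \<open>open U\<close> \<open>\<rho> > 0\<close> unfolding dense_def half
      by (intro dense_at_double_radius) auto
    show "\<delta> * measure N (ball x (\<rho> / 2 ^ lev x)) \<le> measure N (- U \<inter> ball x (\<rho> / 2 ^ lev x))"
      using lev[OF \<open>x \<in> U\<close>] \<open>open U\<close> \<open>\<rho> > 0\<close> unfolding dense_def
      by (intro complement_heavy_where_sparse) auto
  qed
qed

lemma enlarged_family_estimates:
  assumes "open U" "bounded U" "finite A"
    and disj: "disjoint_family_on (\<lambda>y. ball y (r y)) A" and r: "\<And>y. y \<in> A \<Longrightarrow> r y > 0"
    and dense: "\<And>y. y \<in> A \<Longrightarrow> \<epsilon> / c * measure M (ball y (r y)) \<le> measure M (U \<inter> ball y (r y))"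
    and heavy: "\<And>y. y \<in> A \<Longrightarrow> \<delta> * measure N (ball y (r y)) \<le> measure N (- U \<inter> ball y (r y))"
  shows "measure M (\<Union>y\<in>A. ball y (3 * r y)) \<le> K * measure M U"
    and "\<gamma> * measure N (\<Union>y\<in>A. ball y (3 * r y)) \<le> measure N (- U \<inter> (\<Union>y\<in>A. ball y (r y)))"
proof -
  have c_pos: "c > 0" and d_pos: "d > 0" using m.doubling_const n.doubling_const by auto
  have "\<epsilon> / c * measure M (\<Union>y\<in>A. ball y (3 * r y)) \<le> c\<^sup>2 * measure M (U \<inter> (\<Union>y\<in>A. ball y (r y)))"
    using assms eps c_pos by (intro m.measure_triple_balls_dense) auto
  also have "\<dots> \<le> c\<^sup>2 * measure M U"
    using \<open>open U\<close> \<open>bounded U\<close> \<open>finite A\<close> by (intro mult_left_mono m.measure_mono_bounded) auto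
  finally show "measure M (\<Union>y\<in>A. ball y (3 * r y)) \<le> K * measure M U"
    unfolding K_def using eps c_pos by (simp add: field_simps power3_eq_cube power2_eq_square)
  have "\<delta> * measure N (\<Union>y\<in>A. ball y (3 * r y)) \<le> d\<^sup>2 * measure N (- U \<inter> (\<Union>y\<in>A. ball y (r y)))"
    using assms del \<open>open U\<close> by (intro n.measure_triple_balls_dense) auto
  then show "\<gamma> * measure N (\<Union>y\<in>A. ball y (3 * r y)) \<le> measure N (- U \<inter> (\<Union>y\<in>A. ball y (r y)))"
    unfolding \<gamma>_def using d_pos by (simp add: field_simps)
qed

lemma stopping_cover:
  assumes "open U" and U: "U \<subseteq> ball x0 R" and "\<rho> > 0"
    and sparse: "\<And>x. x \<in> U \<Longrightarrow> measure M U \<le> \<epsilon> * measure M (ball x \<rho>)"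
  obtains r :: "'a \<Rightarrow> real" and C :: "nat \<Rightarrow> 'a set" where
    "\<And>x. 0 < r x" "\<And>x. r x \<le> \<rho>" "incseq C" "\<And>n. finite (C n)" "\<And>n. C n \<subseteq> U"
    "disjoint_family_on (\<lambda>y. ball y (r y)) (\<Union>n. C n)"
    "\<And>y. y \<in> U \<Longrightarrow> \<epsilon> / c * measure M (ball y (r y)) \<le> measure M (U \<inter> ball y (r y))"
    "\<And>y. y \<in> U \<Longrightarrow> \<delta> * measure N (ball y (r y)) \<le> measure N (- U \<inter> ball y (r y))"
    "U \<subseteq> (\<Union>n. \<Union>y\<in>C n. ball y (3 * r y))"
proof -
  have "bounded U" using U bounded_subset[OF bounded_ball] by blast
  obtain lev where dense: "\<And>x. x \<in> U \<Longrightarrow> \<epsilon> / c * measure M (ball x (\<rho> / 2 ^ lev x)) \<le> measure M (U \<inter> ball x (\<rho> / 2 ^ lev x))"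
    and heavy: "\<And>x. x \<in> U \<Longrightarrow> \<delta> * measure N (ball x (\<rho> / 2 ^ lev x)) \<le> measure N (- U \<inter> ball x (\<rho> / 2 ^ lev x))"
    using stopping_levels[OF \<open>open U\<close> \<open>bounded U\<close> \<open>\<rho> > 0\<close> sparse] by blast
  define r where "r x = \<rho> / 2 ^ lev x" for x
  have r: "r x > 0" "r x \<le> \<rho>" for x
    unfolding r_def using \<open>\<rho> > 0\<close> by (auto simp: field_simps)
  obtain C where C: "incseq C" "\<And>n. finite (C n)" "\<And>n. C n \<subseteq> U"
    and disj: "disjoint_family_on (\<lambda>y. ball y (r y)) (\<Union>n. C n)"
    and cover: "\<And>x. x \<in> U \<Longrightarrow> \<exists>n. \<exists>y\<in>C n. lev y \<le> lev x \<and> ball x (r x) \<inter> ball y (r y) \<noteq> {}"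
    unfolding r_def by (rule m.dyadic_vitali_covering[OF U \<open>\<rho> > 0\<close>, of lev]) blast
  text \<open>A stopping ball meeting a selected ball of at most the same level lies in its threefold
    enlargement.\<close>
  have cover_U: "U \<subseteq> (\<Union>n. \<Union>y\<in>C n. ball y (3 * r y))"
  proof
    fix x assume "x \<in> U"
    then obtain n y where "y \<in> C n" "lev y \<le> lev x" "ball x (r x) \<inter> ball y (r y) \<noteq> {}"
      using cover by blast
    moreover from this have "r x \<le> r y" unfolding r_def using \<open>\<rho> > 0\<close> by (simp add: frac_le)
    ultimately have "ball x (r x) \<subseteq> ball y (3 * r y)"
      using ball_subset_triple by blast
    moreover have "x \<in> ball x (r x)" using r(1)[of x] by simp
    ultimately show "x \<in> (\<Union>n. \<Union>y\<in>C n. ball y (3 * r y))" using \<open>y \<in> C n\<close> by blast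
  qed
  have dense_r: "\<epsilon> / c * measure M (ball y (r y)) \<le> measure M (U \<inter> ball y (r y))"
    and heavy_r: "\<delta> * measure N (ball y (r y)) \<le> measure N (- U \<inter> ball y (r y))" if "y \<in> U" for y
    using dense[OF that] heavy[OF that] unfolding r_def by simp_all
  show thesis
    by (rule that[of r C, OF r C disj dense_r heavy_r cover_U])
qed

text \<open>The expansion step: an open set \<open>U\<close> which is \<open>\<epsilon>\<close>-sparse at scale \<open>\<rho>\<close> around each of its
  points has an open neighbourhood \<open>V\<close>, within distance \<open>3\<rho>\<close>, with \<open>\<mu>(V) \<le> K \<mu>(U)\<close> and
  \<open>\<nu>(V) \<ge> (1 + \<gamma>) \<nu>(U)\<close>: \<open>V\<close> is the union of the enlarged balls of the stopping cover, and the
  estimates for its finite parts \<open>V\<^sub>n\<close> pass to the limit.\<close>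

lemma expansion_step:
  assumes "open U" and U: "U \<subseteq> ball x0 R" and "\<rho> > 0"
    and sparse: "\<And>x. x \<in> U \<Longrightarrow> measure M U \<le> \<epsilon> * measure M (ball x \<rho>)"
  obtains V where "open V" "U \<subseteq> V" "V \<subseteq> ball x0 (R + 3 * \<rho>)"
    "measure M V \<le> K * measure M U" "(1 + \<gamma>) * measure N U \<le> measure N V"
proof -
  have "bounded U" using U bounded_subset[OF bounded_ball] by blast
  show thesis
  proof (rule stopping_cover[OF \<open>open U\<close> U \<open>\<rho> > 0\<close> sparse])
    fix r :: "'a \<Rightarrow> real" and C :: "nat \<Rightarrow> 'a set"
    assume r: "\<And>x. 0 < r x" "\<And>x. r x \<le> \<rho>" and C: "incseq C" "\<And>n. finite (C n)" "\<And>n. C n \<subseteq> U"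
      and disj: "disjoint_family_on (\<lambda>y. ball y (r y)) (\<Union>n. C n)"
      and dense: "\<And>y. y \<in> U \<Longrightarrow> \<epsilon> / c * measure M (ball y (r y)) \<le> measure M (U \<inter> ball y (r y))"
      and heavy: "\<And>y. y \<in> U \<Longrightarrow> \<delta> * measure N (ball y (r y)) \<le> measure N (- U \<inter> ball y (r y))"
      and cover: "U \<subseteq> (\<Union>n. \<Union>y\<in>C n. ball y (3 * r y))"
    define Vn where "Vn n = (\<Union>y\<in>C n. ball y (3 * r y))" for n
    define V where "V = (\<Union>n. Vn n)"
    have "open V" unfolding V_def Vn_def by blast
    have "U \<subseteq> V" using cover unfolding V_def Vn_def .
    have "V \<subseteq> ball x0 (R + 3 * \<rho>)"
    proof
      fix z assume "z \<in> V"
      then obtain n y where "y \<in> C n" "dist y z < 3 * r y" unfolding V_def Vn_def by auto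
      moreover from this have "y \<in> ball x0 R" using C(3) U by blast
      ultimately show "z \<in> ball x0 (R + 3 * \<rho>)"
        using dist_triangle[of x0 z y] r(2)[of y] by auto
    qed
    then have "bounded V" using bounded_subset[OF bounded_ball] by blast
    have Vn_sets: "Vn n \<in> sets M" for n unfolding Vn_def by blast
    have "incseq Vn"
    proof (rule monoI)
      fix m n :: nat assume "m \<le> n"
      then have "C m \<subseteq> C n" using monoD[OF C(1)] by blast
      then show "Vn m \<subseteq> Vn n" unfolding Vn_def by blast
    qed
    have estimates: "measure M (Vn n) \<le> K * measure M U"
        "\<gamma> * measure N (Vn n) \<le> measure N (- U \<inter> (\<Union>y\<in>C n. ball y (r y)))" for n
    proof -
      have "disjoint_family_on (\<lambda>y. ball y (r y)) (C n)"
        using disj by (rule disjoint_family_on_mono[rotated]) blast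
      then show "measure M (Vn n) \<le> K * measure M U"
        "\<gamma> * measure N (Vn n) \<le> measure N (- U \<inter> (\<Union>y\<in>C n. ball y (r y)))"
        unfolding Vn_def using enlarged_family_estimates[of U "C n" r, OF \<open>open U\<close> \<open>bounded U\<close> C(2)] r(1)
          dense heavy C(3) by blast+
    qed
    have "(\<lambda>n. measure M (Vn n)) \<longlonglongrightarrow> measure M V"
      using \<open>incseq Vn\<close> Vn_sets \<open>bounded V\<close> unfolding V_def by (rule m.tendsto_measure_incseq)
    then have M_V: "measure M V \<le> K * measure M U"
      by (rule LIMSEQ_le_const2) (use estimates(1) in blast)
    text \<open>The \<open>\<nu>\<close>-estimate: the mass of \<open>V\<close> outside \<open>U\<close> controls \<open>\<gamma> \<nu>(U \<inter> V\<^sub>n)\<close>.\<close>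
    have N_V: "measure N U + \<gamma> * measure N (U \<inter> Vn n) \<le> measure N V" for n
    proof -
      let ?W = "- U \<inter> (\<Union>y\<in>C n. ball y (r y))"
      have "- U \<in> sets M" using \<open>open U\<close> by (intro m.borel_sets_M borel_closed) auto
      then have W_sets: "?W \<in> sets N" by auto
      have W_V: "?W \<subseteq> V"
      proof
        fix z assume "z \<in> ?W"
        then obtain y where "y \<in> C n" "z \<in> ball y (r y)" by blast
        moreover have "ball y (r y) \<subseteq> ball y (3 * r y)" using r(1)[of y] by (intro subset_ball) simp
        ultimately show "z \<in> V" unfolding V_def Vn_def by blast
      qed
      have "\<gamma> * measure N (U \<inter> Vn n) \<le> \<gamma> * measure N (Vn n)"
        using \<gamma>_pos \<open>bounded V\<close> \<open>open U\<close>
        by (intro mult_left_mono n.measure_mono_bounded) (auto simp: V_def Vn_def intro: bounded_subset)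
      also have "\<dots> \<le> measure N ?W" by (rule estimates(2))
      finally have "measure N U + \<gamma> * measure N (U \<inter> Vn n) \<le> measure N U + measure N ?W" by simp
      also have "\<dots> \<le> measure N V"
        using \<open>U \<subseteq> V\<close> W_sets W_V \<open>bounded V\<close> \<open>open U\<close> \<open>open V\<close>
        by (intro n.measure_disjoint_add_le) auto
      finally show ?thesis .
    qed
    have "(\<lambda>n. measure N U + \<gamma> * measure N (U \<inter> Vn n)) \<longlonglongrightarrow> measure N U + \<gamma> * measure N U"
      using \<open>incseq Vn\<close> Vn_sets \<open>open U\<close> \<open>bounded U\<close> \<open>U \<subseteq> V\<close> unfolding V_def
      by (intro tendsto_intros n.tendsto_measure_Int_incseq) auto
    then have "measure N U + \<gamma> * measure N U \<le> measure N V"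
      by (rule LIMSEQ_le_const2) (use N_V in blast)
    then have "(1 + \<gamma>) * measure N U \<le> measure N V"
      by (simp add: algebra_simps)
    show thesis
      using that \<open>open V\<close> \<open>U \<subseteq> V\<close> \<open>V \<subseteq> ball x0 (R + 3 * \<rho>)\<close> M_V \<open>(1 + \<gamma>) * measure N U \<le> measure N V\<close>
      by blast
  qed
qed

section \<open>Iterating the expansion step: condition (1) implies condition (2)\<close>

text \<open>The sparseness hypothesis of the expansion step at scale \<open>R/2\<^sup>j\<close>, for a set \<open>V\<close> inside
  \<open>B(x\<^sub>0, 7R)\<close> obtained after \<open>j\<close> steps from a sufficiently small set \<open>G\<close>: the ball \<open>B(x\<^sub>0, R)\<close> lies
  in \<open>B(x, 2\<^bsup>j+3\<^esup>R/2\<^sup>j)\<close>, so doubling \<open>j + 3\<close> times compensates the growth \<open>K\<^sup>j\<close> of \<open>\<mu>\<close>.\<close>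

lemma sparse_at_scale:
  assumes "R > 0" and "V \<subseteq> ball x0 (7 * R)" and "x \<in> V"
    and V_small: "measure M V \<le> K ^ j * measure M G"
    and G_small: "(K * c) ^ j * c ^ 3 * measure M G \<le> \<epsilon> * measure M (ball x0 R)"
  shows "measure M V \<le> \<epsilon> * measure M (ball x (R / 2 ^ j))"
proof -
  have c_pos: "c ^ (j + 3) > 0" using m.doubling_const by simp
  have "dist x0 x < 7 * R" using assms(2,3) by auto
  have "ball x0 R \<subseteq> ball x (2 ^ (j + 3) * (R / 2 ^ j))"
  proof
    fix z assume "z \<in> ball x0 R"
    then have "dist x z < 8 * R"
      using dist_triangle[of x z x0] \<open>dist x0 x < 7 * R\<close> by (simp add: dist_commute)
    then show "z \<in> ball x (2 ^ (j + 3) * (R / 2 ^ j))" by (simp add: power_add)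
  qed
  then have ball_le: "measure M (ball x0 R) \<le> c ^ (j + 3) * measure M (ball x (R / 2 ^ j))"
    using \<open>R > 0\<close> by (intro m.measure_ball_le_enlarged) auto
  have "c ^ (j + 3) * measure M V \<le> c ^ (j + 3) * (K ^ j * measure M G)"
    using V_small c_pos by simp
  also have "\<dots> = (K * c) ^ j * c ^ 3 * measure M G"
    by (simp add: power_add power_mult_distrib algebra_simps)
  also have "\<dots> \<le> \<epsilon> * measure M (ball x0 R)" by (rule G_small)
  also have "\<dots> \<le> c ^ (j + 3) * (\<epsilon> * measure M (ball x (R / 2 ^ j)))"
    using ball_le eps by (simp add: mult.left_commute)
  finally show ?thesis using c_pos by simp
qed

lemma iterated_expansion:
  assumes "open G" "G \<subseteq> ball x0 R" "R > 0"
  shows "(K * c) ^ k * c ^ 3 * measure M G \<le> \<epsilon> * measure M (ball x0 R) \<Longrightarrow>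
    \<exists>V. open V \<and> G \<subseteq> V \<and> V \<subseteq> ball x0 (7 * R - 6 * R / 2 ^ k) \<and>
        measure M V \<le> K ^ k * measure M G \<and> (1 + \<gamma>) ^ k * measure N G \<le> measure N V"
proof (induction k)
  case 0
  have "7 * R - 6 * R / 2 ^ 0 = R" by simp
  then show ?case using assms by (intro exI[of _ G]) auto
next
  case (Suc j)
  have "(K * c) ^ j \<le> (K * c) ^ Suc j" using Kc_gt_1 by (intro power_increasing) auto
  then have smaller: "(K * c) ^ j * c ^ 3 * measure M G \<le> (K * c) ^ Suc j * c ^ 3 * measure M G"
    using m.doubling_const by (intro mult_right_mono) auto
  then obtain V where V: "open V" "G \<subseteq> V" "V \<subseteq> ball x0 (7 * R - 6 * R / 2 ^ j)"
    "measure M V \<le> K ^ j * measure M G" "(1 + \<gamma>) ^ j * measure N G \<le> measure N V"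
    using Suc by fastforce
  define \<rho> where "\<rho> = R / 2 ^ j"
  have "\<rho> > 0" unfolding \<rho>_def using \<open>R > 0\<close> by simp
  have "0 \<le> 6 * R / 2 ^ j" using \<open>R > 0\<close> by simp
  then have "ball x0 (7 * R - 6 * R / 2 ^ j) \<subseteq> ball x0 (7 * R)" by (intro subset_ball) simp
  then have sparse: "measure M V \<le> \<epsilon> * measure M (ball x \<rho>)" if "x \<in> V" for x
    unfolding \<rho>_def using \<open>R > 0\<close> V(3) that V(4) Suc.prems smaller
    by (intro sparse_at_scale) auto
  obtain V' where V': "open V'" "V \<subseteq> V'" "V' \<subseteq> ball x0 (7 * R - 6 * R / 2 ^ j + 3 * \<rho>)"
    "measure M V' \<le> K * measure M V" "(1 + \<gamma>) * measure N V \<le> measure N V'"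
    using expansion_step[OF V(1) V(3) \<open>\<rho> > 0\<close> sparse] by blast
  have radius: "7 * R - 6 * R / 2 ^ j + 3 * \<rho> = 7 * R - 6 * R / 2 ^ Suc j"
    unfolding \<rho>_def by (simp add: field_simps)
  have "K * measure M V \<le> K * (K ^ j * measure M G)"
    using V(4) K_gt_1 by (intro mult_left_mono) auto
  then have M_V': "measure M V' \<le> K ^ Suc j * measure M G"
    using V'(4) by (simp add: mult.assoc)
  have "(1 + \<gamma>) * ((1 + \<gamma>) ^ j * measure N G) \<le> (1 + \<gamma>) * measure N V"
    using V(5) \<gamma>_pos by (intro mult_left_mono) auto
  then have N_V': "(1 + \<gamma>) ^ Suc j * measure N G \<le> measure N V'"
    using V'(5) by (simp add: mult.assoc)
  show ?case using V V' radius M_V' N_V' by (intro exI[of _ V']) auto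
qed

text \<open>Combined with outer regularity: a set \<open>E\<close> of small relative \<open>\<mu>\<close>-measure has a \<open>\<nu>\<close>-measure
  which is smaller than that of the ball by the factor \<open>(1 + \<gamma>)\<^sup>-\<^sup>k\<close>, up to \<open>d\<^sup>3\<close>.\<close>

lemma small_set_estimate:
  assumes E: "E \<in> sets M" "E \<subseteq> ball x0 R" and "R > 0"
    and small: "(K * c) ^ k * c ^ 3 * measure M E < \<epsilon> * measure M (ball x0 R)"
  shows "(1 + \<gamma>) ^ k * measure N E \<le> d ^ 3 * measure N (ball x0 R)"
proof -
  define q where "q = (K * c) ^ k * c ^ 3"
  have "q > 0" unfolding q_def using Kc_gt_1 m.doubling_const by simp
  define e where "e = (\<epsilon> * measure M (ball x0 R) - q * measure M E) / q"
  have "e > 0" unfolding e_def using small \<open>q > 0\<close> by (simp add: q_def)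
  then obtain G where G: "open G" "E \<subseteq> G" "G \<subseteq> ball x0 R" "measure M G \<le> measure M E + e"
    using m.outer_approximation[OF E] by blast
  have "q * measure M G \<le> q * (measure M E + e)"
    using G(4) \<open>q > 0\<close> by simp
  also have "\<dots> = \<epsilon> * measure M (ball x0 R)"
    unfolding e_def using \<open>q > 0\<close> by (simp add: field_simps)
  finally have "(K * c) ^ k * c ^ 3 * measure M G \<le> \<epsilon> * measure M (ball x0 R)"
    unfolding q_def .
  then obtain V where V: "V \<subseteq> ball x0 (7 * R - 6 * R / 2 ^ k)" "(1 + \<gamma>) ^ k * measure N G \<le> measure N V"
    "open V"
    using iterated_expansion[OF G(1,3) \<open>R > 0\<close>] by blast
  have "0 \<le> 6 * R / 2 ^ k" using \<open>R > 0\<close> by simp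
  then have "7 * R - 6 * R / 2 ^ k \<le> 8 * R" using \<open>R > 0\<close> by linarith
  then have "ball x0 (7 * R - 6 * R / 2 ^ k) \<subseteq> ball x0 (2 ^ 3 * R)" by (intro subset_ball) simp
  then have V_sub: "V \<subseteq> ball x0 (2 ^ 3 * R)" using V(1) by blast
  have "(1 + \<gamma>) ^ k * measure N E \<le> (1 + \<gamma>) ^ k * measure N G"
    using G E \<gamma>_pos by (intro mult_left_mono n.measure_mono_bounded) (auto intro: bounded_subset[OF bounded_ball])
  also have "\<dots> \<le> measure N V" by (rule V(2))
  also have "\<dots> \<le> measure N (ball x0 (2 ^ 3 * R))"
    using V_sub V(3) by (intro n.measure_mono_bounded) auto
  also have "\<dots> \<le> d ^ 3 * measure N (ball x0 R)"
    using \<open>R > 0\<close> by (rule n.measure_ball_doubling_iter)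
  finally show ?thesis .
qed

text \<open>Choosing the number of iterations optimally gives a power decay of \<open>\<nu>(E)\<close> in terms of any
  \<open>s\<close> with \<open>\<mu>(E) < s \<mu>(B)\<close>.\<close>

lemma power_decay:
  assumes E: "E \<in> sets M" "E \<subseteq> ball x0 R" and "R > 0" "s > 0"
    and E_small: "measure M E < s * measure M (ball x0 R)"
  shows "measure N E \<le> d ^ 3 * (1 + \<gamma>) * K powr \<eta> * measure N (ball x0 R) * s powr \<eta>"
proof -
  define u where "u = K * s"
  have "u > 0" unfolding u_def using K_gt_1 \<open>s > 0\<close> by simp
  have rhs: "d ^ 3 * (1 + \<gamma>) * K powr \<eta> * measure N (ball x0 R) * s powr \<eta>
      = d ^ 3 * measure N (ball x0 R) * ((1 + \<gamma>) * u powr \<eta>)"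
    unfolding u_def using K_gt_1 \<open>s > 0\<close> by (simp add: powr_mult mult_ac)
  have d3: "d ^ 3 \<ge> 1" using n.doubling_const by simp
  show ?thesis
  proof (cases "u \<le> 1")
    case True
    obtain k where k: "(K * c) ^ k * u \<le> 1" "1 \<le> (1 + \<gamma>) ^ k * ((1 + \<gamma>) * u powr \<eta>)"
      using exists_steps_power_bound[OF Kc_gt_1 \<gamma>_pos \<open>u > 0\<close> True] unfolding \<eta>_def by blast
    have "(K * c) ^ k * c ^ 3 * measure M E < (K * c) ^ k * c ^ 3 * (s * measure M (ball x0 R))"
      using E_small Kc_gt_1 m.doubling_const by (intro mult_strict_left_mono) auto
    also have "\<dots> = \<epsilon> * ((K * c) ^ k * u) * measure M (ball x0 R)"
      unfolding u_def K_def using eps by (simp add: field_simps)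
    also have "\<dots> \<le> \<epsilon> * measure M (ball x0 R)"
      using k(1) eps by (intro mult_right_mono) (auto intro: mult_left_le)
    finally have "(1 + \<gamma>) ^ k * measure N E \<le> d ^ 3 * measure N (ball x0 R)"
      by (intro small_set_estimate E \<open>R > 0\<close>)
    then have "(1 + \<gamma>) ^ k * measure N E * ((1 + \<gamma>) * u powr \<eta>)
        \<le> d ^ 3 * measure N (ball x0 R) * ((1 + \<gamma>) * u powr \<eta>)"
      using \<gamma>_pos by (intro mult_right_mono) auto
    moreover have "measure N E \<le> measure N E * ((1 + \<gamma>) ^ k * ((1 + \<gamma>) * u powr \<eta>))"
      using mult_left_mono[OF k(2), of "measure N E"] by simp
    ultimately show ?thesis unfolding rhs by (simp add: mult_ac)
  next
    case False
    have "1 \<le> d ^ 3 * ((1 + \<gamma>) * u powr \<eta>)"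
    proof -
      have "1 \<le> u powr \<eta>" using False \<eta>_pos by (intro ge_one_powr_ge_zero) auto
      then have "1 * 1 \<le> (1 + \<gamma>) * u powr \<eta>" using \<gamma>_pos by (intro mult_mono) auto
      then have "1 * 1 \<le> d ^ 3 * ((1 + \<gamma>) * u powr \<eta>)" using d3 n.doubling_const by (intro mult_mono) auto
      then show ?thesis by simp
    qed
    then have "1 * measure N (ball x0 R) \<le> d ^ 3 * ((1 + \<gamma>) * u powr \<eta>) * measure N (ball x0 R)"
      by (rule mult_right_mono) simp
    then have "measure N (ball x0 R) \<le> d ^ 3 * measure N (ball x0 R) * ((1 + \<gamma>) * u powr \<eta>)"
      by (simp add: mult_ac)
    moreover have "measure N E \<le> measure N (ball x0 R)"
      using E by (intro n.measure_mono_bounded) auto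
    ultimately show ?thesis unfolding rhs by linarith
  qed
qed

text \<open>Letting \<open>s\<close> decrease to \<open>\<mu>(E)/\<mu>(B)\<close> gives the power inequality of condition (2).\<close>

lemma relative_power_decay:
  assumes "r > 0" "E \<in> sets M" "E \<subseteq> ball x r"
  shows "measure N E \<le> d ^ 3 * (1 + \<gamma>) * K powr \<eta> * measure N (ball x r)
      * (measure M E / measure M (ball x r)) powr \<eta>"
proof (rule le_powr_at_right)
  have "measure M (ball x r) > 0" using m.measure_ball_pos \<open>r > 0\<close> by simp
  then show "0 \<le> measure M E / measure M (ball x r)" by simp
  show "\<eta> > 0" by (rule \<eta>_pos)
  fix s assume s: "s > measure M E / measure M (ball x r)"
  then have "measure M E < s * measure M (ball x r)" "s > 0"
    using \<open>measure M (ball x r) > 0\<close> by (auto simp: field_simps intro: le_less_trans[OF _ s])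
  then show "measure N E \<le> d ^ 3 * (1 + \<gamma>) * K powr \<eta> * measure N (ball x r) * s powr \<eta>"
    using assms by (intro power_decay) auto
qed

text \<open>Condition (2), with exponent \<open>1/p = min \<eta> 1\<close>.\<close>

theorem cond2_holds: "cond2 M N"
  unfolding cond2_def
proof (intro exI conjI allI impI)
  define p where "p = 1 / min \<eta> 1"
  have p: "p \<ge> 1" "1 / p = min \<eta> 1" unfolding p_def using \<eta>_pos by auto
  show "d ^ 3 * (1 + \<gamma>) * K powr \<eta> > 0" using n.doubling_const \<gamma>_pos K_gt_1 by simp
  show "p \<ge> 1" by (rule p(1))
  fix x r E assume "r > 0" "E \<in> sets M" "E \<subseteq> ball x r"
  define t where "t = measure M E / measure M (ball x r)"
  have "0 \<le> t" "t \<le> 1"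
    unfolding t_def using m.measure_ball_pos[OF \<open>r > 0\<close>] \<open>E \<in> sets M\<close> \<open>E \<subseteq> ball x r\<close>
    by (auto intro!: m.measure_mono_bounded simp: field_simps)
  then have "t powr \<eta> \<le> t powr (1 / p)" unfolding p(2) by (intro powr_mono') auto
  moreover have "0 \<le> d ^ 3 * (1 + \<gamma>) * K powr \<eta> * measure N (ball x r)"
    using n.doubling_const \<gamma>_pos by simp
  ultimately have "d ^ 3 * (1 + \<gamma>) * K powr \<eta> * measure N (ball x r) * t powr \<eta>
      \<le> d ^ 3 * (1 + \<gamma>) * K powr \<eta> * measure N (ball x r) * t powr (1 / p)"
    by (rule mult_left_mono)
  then show "measure N E \<le> d ^ 3 * (1 + \<gamma>) * K powr \<eta> * measure N (ball x r) * t powr (1 / p)"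
    using relative_power_decay[OF \<open>r > 0\<close> \<open>E \<in> sets M\<close> \<open>E \<subseteq> ball x r\<close>]
    unfolding t_def[symmetric] by linarith
qed

end

lemma cond1_imp_cond2:
  assumes "doubling_space M c" "doubling_space N d" "cond1 M N"
  shows "cond2 M N"
proof -
  obtain \<epsilon> \<delta> :: real where "0 < \<epsilon>" "\<epsilon> < 1" "0 < \<delta>" "\<delta> < 1"
    and "\<forall>x r E. r > 0 \<longrightarrow> E \<in> sets M \<longrightarrow> E \<subseteq> ball x r \<longrightarrow>
        measure M E \<le> \<epsilon> * measure M (ball x r) \<longrightarrow> measure N E \<le> (1 - \<delta>) * measure N (ball x r)"
    using assms(3) unfolding cond1_def by blast
  then interpret doubling_cond1 M N c d \<epsilon> \<delta>
    using assms(1,2) by (intro doubling_cond1.intro doubling_cond1_axioms.intro) auto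
  show ?thesis by (rule cond2_holds)
qed

section \<open>From condition (2) to condition (4)\<close>

text \<open>Condition (2) for \<open>(\<mu>, \<nu>)\<close> gives condition (1) with the roles of \<open>\<mu>\<close> and \<open>\<nu>\<close> exchanged:
  a set of small \<open>\<nu>\<close>-measure cannot have almost full \<open>\<mu>\<close>-measure, since its complement in the
  ball would then be \<open>\<mu>\<close>-small and hence \<open>\<nu>\<close>-small.\<close>

lemma cond2_imp_cond1_swap:
  assumes "doubling_space M c" "doubling_space N d" "cond2 M N"
  shows "cond1 N M"
proof -
  interpret m: doubling_space M c by fact
  interpret n: doubling_space N d by fact
  obtain C p :: real where "C > 0" "p \<ge> 1" and C2: "\<And>x r E. r > 0 \<Longrightarrow> E \<in> sets M \<Longrightarrow> E \<subseteq> ball x r \<Longrightarrow>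
        measure N E \<le> C * measure N (ball x r) * (measure M E / measure M (ball x r)) powr (1 / p)"
    using assms(3) unfolding cond2_def by blast
  define \<delta> where "\<delta> = min (1 / 2) ((1 / (2 * C)) powr p)"
  have \<delta>: "0 < \<delta>" "\<delta> < 1" unfolding \<delta>_def using \<open>C > 0\<close> by auto
  have "\<delta> powr (1 / p) \<le> ((1 / (2 * C)) powr p) powr (1 / p)"
    unfolding \<delta>_def using \<open>p \<ge> 1\<close> by (intro powr_mono2) auto
  also have "\<dots> = 1 / (2 * C)" using \<open>C > 0\<close> \<open>p \<ge> 1\<close> by (simp add: powr_powr)
  finally have \<delta>_root: "\<delta> powr (1 / p) \<le> 1 / (2 * C)" .
  show ?thesis unfolding cond1_def
  proof (rule exI[of _ "1 / 4"], rule exI[of _ \<delta>], intro conjI allI impI)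
    show "(0::real) < 1 / 4" "(1 / 4::real) < 1" "0 < \<delta>" "\<delta> < 1" using \<delta> by auto
    fix x r E assume "r > 0" "E \<in> sets N" "E \<subseteq> ball x r"
      and E_small: "measure N E \<le> 1 / 4 * measure N (ball x r)"
    define F where "F = ball x r - E"
    have "E \<in> sets M" using \<open>E \<in> sets N\<close> m.sets_M n.sets_M by simp
    have mB: "measure M (ball x r) > 0" "measure N (ball x r) > 0"
      using m.measure_ball_pos n.measure_ball_pos \<open>r > 0\<close> by auto
    have F: "measure M F = measure M (ball x r) - measure M E"
      "measure N F = measure N (ball x r) - measure N E"
      unfolding F_def using \<open>E \<in> sets M\<close> \<open>E \<in> sets N\<close> \<open>E \<subseteq> ball x r\<close>
        m.emeasure_bounded_finite n.emeasure_bounded_finite by (auto intro!: measure_Diff)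
    show "measure M E \<le> (1 - \<delta>) * measure M (ball x r)"
    proof (rule ccontr)
      assume "\<not> ?thesis"
      then have "measure M F / measure M (ball x r) \<le> \<delta>"
        using mB unfolding F by (simp add: field_simps)
      then have "(measure M F / measure M (ball x r)) powr (1 / p) \<le> \<delta> powr (1 / p)"
        using \<open>p \<ge> 1\<close> by (intro powr_mono2) auto
      then have "(measure M F / measure M (ball x r)) powr (1 / p) \<le> 1 / (2 * C)"
        using \<delta>_root by linarith
      moreover have "measure N F \<le> C * measure N (ball x r) * (measure M F / measure M (ball x r)) powr (1 / p)"
        using \<open>E \<in> sets M\<close> unfolding F_def by (intro C2[OF \<open>r > 0\<close>]) auto
      moreover have "0 \<le> C * measure N (ball x r)" using \<open>C > 0\<close> by simp
      ultimately have "measure N F \<le> C * measure N (ball x r) * (1 / (2 * C))"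
        by (meson mult_left_mono order_trans)
      then show False using F E_small mB \<open>C > 0\<close> by simp
    qed
  qed
qed

text \<open>Condition (2) for \<open>(\<nu>, \<mu>)\<close>, solved for \<open>\<nu>(E)\<close>, is the power lower bound of condition (4).\<close>

lemma cond2_swap_imp_lower_bound:
  assumes "doubling_space M c" "doubling_space N d" "cond2 N M"
  shows "\<exists>C p::real. C > 0 \<and> p \<ge> 1 \<and> (\<forall>x r E. r > 0 \<longrightarrow> E \<in> sets M \<longrightarrow> E \<subseteq> ball x r \<longrightarrow>
     measure N E \<ge> C * measure N (ball x r) * (measure M E / measure M (ball x r)) powr p)"
proof -
  interpret m: doubling_space M c by fact
  interpret n: doubling_space N d by fact
  obtain C p :: real where "C > 0" "p \<ge> 1" and C2: "\<And>x r E. r > 0 \<Longrightarrow> E \<in> sets N \<Longrightarrow> E \<subseteq> ball x r \<Longrightarrow>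
        measure M E \<le> C * measure M (ball x r) * (measure N E / measure N (ball x r)) powr (1 / p)"
    using assms(3) unfolding cond2_def by blast
  show ?thesis
  proof (rule exI[of _ "1 / C powr p"], rule exI[of _ p], intro conjI allI impI)
    show "1 / C powr p > 0" "p \<ge> 1" using \<open>C > 0\<close> \<open>p \<ge> 1\<close> by auto
    fix x r E assume "r > 0" "E \<in> sets M" "E \<subseteq> ball x r"
    have "E \<in> sets N" using \<open>E \<in> sets M\<close> m.sets_M n.sets_M by simp
    have mB: "measure M (ball x r) > 0" "measure N (ball x r) > 0"
      using m.measure_ball_pos n.measure_ball_pos \<open>r > 0\<close> by auto
    define u where "u = measure M E / measure M (ball x r)"
    define v where "v = measure N E / measure N (ball x r)"
    have "u \<ge> 0" "v \<ge> 0" unfolding u_def v_def using mB by auto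
    have "u \<le> C * v powr (1 / p)"
      using C2[OF \<open>r > 0\<close> \<open>E \<in> sets N\<close> \<open>E \<subseteq> ball x r\<close>] mB unfolding u_def v_def by (simp add: field_simps)
    then have "u powr p \<le> (C * v powr (1 / p)) powr p"
      using \<open>u \<ge> 0\<close> \<open>p \<ge> 1\<close> by (intro powr_mono2) auto
    also have "\<dots> = C powr p * v"
      using \<open>C > 0\<close> \<open>v \<ge> 0\<close> \<open>p \<ge> 1\<close> by (simp add: powr_mult powr_powr)
    finally have "1 / C powr p * measure N (ball x r) * u powr p \<le> measure N (ball x r) * v"
      using \<open>C > 0\<close> mB by (simp add: field_simps)
    then show "1 / C powr p * measure N (ball x r) * (measure M E / measure M (ball x r)) powr p \<le> measure N E"
      unfolding u_def[symmetric] v_def using mB by simp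
  qed
qed

text \<open>A doubling measure is \<open>\<sigma>\<close>-finite: space is exhausted by countably many balls.\<close>

lemma (in doubling_space) sigma_finite: "sigma_finite_measure M"
proof
  have "(\<Union>n::nat. ball undefined (real n)) = UNIV"
    by (auto simp: dist_commute intro: reals_Archimedean2)
  then show "\<exists>A. countable A \<and> A \<subseteq> sets M \<and> \<Union> A = space M \<and> (\<forall>a\<in>A. emeasure M a \<noteq> \<infinity>)"
    using emeasure_bounded_finite
    by (intro exI[of _ "range (\<lambda>n::nat. ball undefined (real n))"]) auto
qed

lemma cond2_imp_absolutely_continuous:
  assumes "doubling_space M c" "doubling_space N d" "cond2 M N"
  shows "absolutely_continuous M N"
  unfolding absolutely_continuous_def
proof
  interpret m: doubling_space M c by fact
  interpret n: doubling_space N d by fact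
  obtain C p :: real where C2: "\<And>x r E. r > 0 \<Longrightarrow> E \<in> sets M \<Longrightarrow> E \<subseteq> ball x r \<Longrightarrow>
        measure N E \<le> C * measure N (ball x r) * (measure M E / measure M (ball x r)) powr (1 / p)"
    using assms(3) unfolding cond2_def by blast
  fix E assume E: "E \<in> null_sets M"
  have "E \<inter> ball undefined (Suc n) \<in> null_sets N" for n :: nat
  proof -
    let ?B = "ball undefined (real (Suc n))"
    have "E \<inter> ?B \<in> null_sets M" using E by (rule null_set_Int2) simp
    then have "measure M (E \<inter> ?B) = 0" by (simp add: measure_def null_setsD1)
    then have "measure N (E \<inter> ?B) \<le> 0"
      using C2[of "real (Suc n)" "E \<inter> ?B" undefined] null_setsD2[OF \<open>E \<inter> ?B \<in> null_sets M\<close>] by simp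
    moreover have "E \<inter> ?B \<in> fmeasurable N"
      using null_setsD2[OF E] m.sets_M n.sets_M by (intro n.fmeasurable_bounded) (auto simp: bounded_Int)
    moreover have "measure N (E \<inter> ?B) \<ge> 0" by (rule measure_nonneg)
    ultimately have "emeasure N (E \<inter> ?B) = 0"
      by (simp add: emeasure_eq_measure2 antisym)
    then show ?thesis
      using \<open>E \<inter> ?B \<in> fmeasurable N\<close> by (auto intro: null_setsI)
  qed
  then have "(\<Union>n. E \<inter> ball undefined (Suc n)) \<in> null_sets N" by blast
  moreover have "(\<Union>n. E \<inter> ball undefined (Suc n)) = E"
  proof (intro equalityI subsetI)
    fix x assume "x \<in> E"
    obtain n :: nat where "dist undefined x < real n" using reals_Archimedean2 by blast
    then have "x \<in> ball undefined (Suc n)" by simp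
    then show "x \<in> (\<Union>n. E \<inter> ball undefined (Suc n))" using \<open>x \<in> E\<close> by blast
  qed auto
  ultimately show "E \<in> null_sets N" by simp
qed

text \<open>An absolutely continuous doubling measure is a weighted measure: the Radon-Nikodym density
  is finite almost everywhere, since \<open>\<nu>\<close> is finite on balls, and hence integrable on balls.\<close>

lemma absolutely_continuous_imp_weighted:
  assumes "doubling_space M c" "doubling_space N d" "absolutely_continuous M N"
  shows "weighted_measure M N"
proof -
  interpret m: doubling_space M c by fact
  interpret n: doubling_space N d by fact
  have sets_N: "sets N = sets M" using m.sets_M n.sets_M by simp
  obtain f where f: "f \<in> borel_measurable M" "density M f = N"
    using sigma_finite_measure.Radon_Nikodym[OF m.sigma_finite assms(3) sets_N] by blast
  have N_f: "emeasure N A = (\<integral>\<^sup>+ x. f x * indicator A x \<partial>M)" if "A \<in> sets M" for A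
    using emeasure_density[OF f(1) that] f(2) by simp
  have "AE x in M. f x * indicator (ball undefined (real n)) x \<noteq> \<infinity>" for n :: nat
  proof (rule nn_integral_PInf_AE)
    have [measurable]: "ball undefined (real n) \<in> sets M" by simp
    show "(\<lambda>x. f x * indicator (ball undefined (real n)) x) \<in> borel_measurable M"
      using f(1) by measurable
    show "(\<integral>\<^sup>+ x. f x * indicator (ball undefined (real n)) x \<partial>M) \<noteq> \<infinity>"
      using N_f[of "ball undefined (real n)"] n.emeasure_bounded_finite[of "ball undefined (real n)"] by simp
  qed
  then have "AE x in M. \<forall>n::nat. f x * indicator (ball undefined (real n)) x \<noteq> \<infinity>"
    by (simp add: AE_all_countable)
  then have f_finite: "AE x in M. f x \<noteq> \<infinity>"
  proof (rule eventually_mono)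
    fix x assume "\<forall>n::nat. f x * indicator (ball undefined (real n)) x \<noteq> \<infinity>"
    moreover obtain n :: nat where "dist undefined x < real n" using reals_Archimedean2 by blast
    ultimately show "f x \<noteq> \<infinity>" by (metis indicator_simps(1) mem_ball mult.right_neutral)
  qed
  define \<omega> where "\<omega> x = enn2real (f x)" for x
  have \<omega>_f: "(\<integral>\<^sup>+ x. ennreal (\<omega> x) * indicator A x \<partial>M) = (\<integral>\<^sup>+ x. f x * indicator A x \<partial>M)" for A
    by (rule nn_integral_cong_AE) (use f_finite in \<open>auto simp: \<omega>_def less_top[symmetric] elim!: eventually_mono\<close>)
  have \<omega>_meas: "\<omega> \<in> borel_measurable M" unfolding \<omega>_def using f(1) by measurable
  show ?thesis unfolding weighted_measure_def
  proof (intro exI[of _ \<omega>] conjI allI impI ballI)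
    show "\<omega> \<in> borel_measurable M" "0 \<le> \<omega> y" for y using \<omega>_meas by (auto simp: \<omega>_def)
    show "emeasure N A = (\<integral>\<^sup>+ y \<in> A. ennreal (\<omega> y) \<partial>M)" if "A \<in> sets M" for A
      using N_f[OF that] \<omega>_f[of A] by simp
    fix x and r :: real assume "r > 0"
    have "(\<integral>\<^sup>+ y. ennreal (indicator (ball x r) y *\<^sub>R \<omega> y) \<partial>M) = (\<integral>\<^sup>+ y. ennreal (\<omega> y) * indicator (ball x r) y \<partial>M)"
      by (intro nn_integral_cong) (auto split: split_indicator)
    also have "\<dots> = emeasure N (ball x r)"
      using \<omega>_f[of "ball x r"] N_f[of "ball x r"] by simp
    also have "\<dots> < \<infinity>" using n.emeasure_ball_finite \<open>r > 0\<close> by simp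
    moreover have "(\<lambda>y. indicator (ball x r) y *\<^sub>R \<omega> y) \<in> borel_measurable M"
    proof -
      have [measurable]: "ball x r \<in> sets M" "\<omega> \<in> borel_measurable M" using \<omega>_meas by simp_all
      show ?thesis by measurable
    qed
    ultimately show "set_integrable M (ball x r) \<omega>"
      unfolding set_integrable_def by (intro integrableI_nonneg) (auto simp: \<omega>_def)
  qed
qed

theorem theorem4p3:
  fixes \<mu> \<nu> :: "'a::metric_space measure"
  assumes "doubling_measure \<mu>"
    and "doubling_measure \<nu>"
    and "cond1 \<mu> \<nu>"
  shows "cond2 \<mu> \<nu> \<and> cond4 \<mu> \<nu>"
proof -
  obtain c d where \<mu>: "doubling_space \<mu> c" and \<nu>: "doubling_space \<nu> d"
    using doubling_measure_imp_doubling_space assms(1,2) by metis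
  have "cond2 \<mu> \<nu>" using cond1_imp_cond2[OF \<mu> \<nu> assms(3)] .
  moreover have "cond2 \<nu> \<mu>"
    using cond1_imp_cond2[OF \<nu> \<mu>] cond2_imp_cond1_swap[OF \<mu> \<nu> \<open>cond2 \<mu> \<nu>\<close>] .
  then have "\<exists>C p::real. C > 0 \<and> p \<ge> 1 \<and> (\<forall>x r E. r > 0 \<longrightarrow> E \<in> sets \<mu> \<longrightarrow> E \<subseteq> ball x r \<longrightarrow>
      measure \<nu> E \<ge> C * measure \<nu> (ball x r) * (measure \<mu> E / measure \<mu> (ball x r)) powr p)"
    by (rule cond2_swap_imp_lower_bound[OF \<mu> \<nu>])
  moreover have "weighted_measure \<mu> \<nu>"
    using absolutely_continuous_imp_weighted[OF \<mu> \<nu> cond2_imp_absolutely_continuous[OF \<mu> \<nu>]]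
      \<open>cond2 \<mu> \<nu>\<close> by blast
  ultimately show ?thesis unfolding cond4_def by blast
qed

end
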